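(* If $X$ is a perfectly normal $T_1$ space, then $T''(X)$ is a (Von Neumann) regular ring.
   Context: $C(X)$ is the ring of real-valued continuous functions on $X$; a cozero set is a set $\{x: h(x)\neq 0\}$ with $h\in C(X)$. $T''(X)$ is the ring (under pointwise operations) of all functions $f\colon X\to\mathbb{R}$ for which there is a dense cozero set $U$ of $X$ with $f|_U$ continuous. A commutative ring $R$ is regular if for each $a\in R$ there is $x\in R$ with $a=a^2x$. $X$ is perfectly normal if it is normal and every closed set is a $G_\delta$-set (equivalently, every closed set is a zero set). *)

theory Defs
  imports "HOL-Analysis.Analysis"
begin

definition perfectly_normal_space :: "'a topology \<Rightarrow> bool" where
  "perfectly_normal_space X \<longleftrightarrow>
     normal_space X \<and> (\<forall>C. closedin X C \<longrightarrow> gdelta_in X C)"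

definition cozero_set_in :: "'a topology \<Rightarrow> 'a set \<Rightarrow> bool" where
  "cozero_set_in X U \<longleftrightarrow>
     (\<exists>h. continuous_map X euclideanreal h \<and> U = {x \<in> topspace X. h x \<noteq> 0})"

text \<open>T''(X): real functions on X (extended by 0 outside topspace X, so that
  functions on X correspond one-to-one to elements) that are continuous on some
  dense cozero set.\<close>
definition Tpp :: "'a topology \<Rightarrow> ('a \<Rightarrow> real) set" where
  "Tpp X = {f. (\<forall>x. x \<notin> topspace X \<longrightarrow> f x = 0) \<and>
     (\<exists>U. cozero_set_in X U \<and> X closure_of U = topspace X \<and>
          continuous_map (subtopology X U) euclideanreal f)}"

definition regular_fun_ring :: "('a \<Rightarrow> real) set \<Rightarrow> bool" where
  "regular_fun_ring R \<longleftrightarrow>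
     (\<forall>a\<in>R. \<exists>g\<in>R. a = (\<lambda>x. (a x)\<^sup>2 * g x))"

end

theory Submission
  imports Defs
begin

text \<open>Let f be continuous on the dense cozero set U, and let W be the part of U where f does not
  vanish. The pointwise inverse of f (with 1/0 = 0) is continuous on the open set W \<union> (U - cl W),
  which is again dense. In a perfectly normal space every open set is a cozero set: its complement
  C is an intersection of open sets G_n, Urysohn functions vanish on C and equal 1 off G_n, and a
  weighted series of these functions vanishes exactly on C. Hence the inverse of f
  is a g in T''(X) with f = f^2 g.\<close>

lemma continuous_map_suminf:
  fixes f :: "nat \<Rightarrow> 'a \<Rightarrow> 'b::banach"
  assumes cont: "\<And>n. continuous_map X euclidean (f n)"
    and bound: "\<And>n x. x \<in> topspace X \<Longrightarrow> norm (f n x) \<le> M n"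
    and "summable M"
  shows "continuous_map X euclidean (\<lambda>x. \<Sum>n. f n x)"
proof -
  have lim: "uniform_limit (topspace X) (\<lambda>n x. \<Sum>i<n. f i x) (\<lambda>x. \<Sum>n. f n x) sequentially"
    by (rule Weierstrass_m_test) (use bound \<open>summable M\<close> in auto)
  have "continuous_map X Met_TC.mtopology (\<lambda>x. \<Sum>n. f n x)"
  proof (rule Met_TC.continuous_map_uniform_limit[where F = sequentially])
    show "\<forall>\<^sub>F n in sequentially. continuous_map X Met_TC.mtopology (\<lambda>x. \<Sum>i<n. f i x)"
      using cont by (simp add: continuous_map_sum)
    show "\<forall>\<^sub>F n in sequentially. \<forall>x\<in>topspace X. (\<Sum>n. f n x) \<in> UNIV \<and>
            dist (\<Sum>i<n. f i x) (\<Sum>n. f n x) < e" if "0 < e" for e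
      using uniform_limitD[OF lim that] by simp
  qed simp
  then show ?thesis
    by simp
qed

lemma cozero_set_in_imp_openin:
  assumes "cozero_set_in X U"
  shows "openin X U"
proof -
  obtain h where h: "continuous_map X euclideanreal h" and U: "U = {x \<in> topspace X. h x \<noteq> 0}"
    using assms unfolding cozero_set_in_def by blast
  have "openin X {x \<in> topspace X. h x \<in> - {0}}"
    by (rule openin_continuous_map_preimage[OF h]) (simp add: open_Compl)
  then show ?thesis
    by (simp add: U)
qed

lemma cozero_set_in_UN:
  assumes "\<And>n::nat. cozero_set_in X (U n)"
  shows "cozero_set_in X (\<Union>n. U n)"
proof -
  obtain h where h: "\<And>n. continuous_map X euclideanreal (h n)"
    and U: "\<And>n. U n = {x \<in> topspace X. h n x \<noteq> 0}"
    using assms unfolding cozero_set_in_def by metis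
  define k where "k x = (\<Sum>n. (1/2::real)^n * min 1 \<bar>h n x\<bar>)" for x
  have term_bound: "norm ((1/2::real)^n * min 1 \<bar>h n x\<bar>) \<le> (1/2)^n" for n x
    by (simp add: abs_mult)
  have geometric: "summable (\<lambda>n. (1/2::real)^n)"
    by (simp add: summable_geometric)
  have summable: "summable (\<lambda>n. (1/2::real)^n * min 1 \<bar>h n x\<bar>)" for x
    by (rule summable_comparison_test[OF _ geometric]) (use term_bound in auto)
  have "continuous_map X euclideanreal k"
    unfolding k_def
    by (rule continuous_map_suminf[OF _ term_bound geometric])
      (intro continuous_map_real_mult_left continuous_map_real_min continuous_map_real_abs h; simp)
  moreover have "k x = 0 \<longleftrightarrow> (\<forall>n. h n x = 0)" for x
  proof -
    have "min 1 \<bar>a\<bar> = 0 \<longleftrightarrow> a = 0" for a :: real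
      by (auto simp: min_def)
    then show ?thesis
      using suminf_eq_zero_iff[OF summable] by (simp add: k_def)
  qed
  then have "(\<Union>n. U n) = {x \<in> topspace X. k x \<noteq> 0}"
    by (auto simp: U)
  ultimately show ?thesis
    unfolding cozero_set_in_def by blast
qed

lemma normal_space_separating_cozero_set:
  assumes "normal_space X" "closedin X C" "closedin X D" "disjnt C D"
  obtains V where "cozero_set_in X V" "D \<subseteq> V" "V \<subseteq> topspace X - C"
proof -
  obtain h where h: "continuous_map X (top_of_set {0..1::real}) h"
    and h0: "h ` C \<subseteq> {0}" and h1: "h ` D \<subseteq> {1}"
    using Urysohn_lemma[OF assms, of 0 1] by auto
  show ?thesis
  proof
    show "cozero_set_in X {x \<in> topspace X. h x \<noteq> 0}"
      using h unfolding cozero_set_in_def continuous_map_in_subtopology by blast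
    show "D \<subseteq> {x \<in> topspace X. h x \<noteq> 0}"
      using h1 closedin_subset[OF assms(3)] by auto
  qed (use h0 in auto)
qed

lemma normal_space_gdelta_in_imp_cozero_set_in_complement:
  assumes normal: "normal_space X" and C: "closedin X C" "gdelta_in X C"
  shows "cozero_set_in X (topspace X - C)"
proof -
  obtain \<T> where \<T>: "countable \<T>" "\<T> \<subseteq> Collect (openin X)" "\<Inter>\<T> = C"
    using C(2) unfolding gdelta_in_alt intersection_of_def by auto
  \<comment> \<open>inserting topspace X makes the family nonempty, so that it can be enumerated\<close>
  define G where "G = from_nat_into (insert (topspace X) \<T>)"
  have G_range: "range G = insert (topspace X) \<T>"
    unfolding G_def using \<T>(1) by simp
  have G_open: "openin X (G n)" for n
  proof -
    have "G n \<in> insert (topspace X) \<T>"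
      using G_range by blast
    then show ?thesis
      using \<T>(2) by auto
  qed
  have G_Inter: "\<Inter>(range G) = C"
    using G_range \<T>(3) closedin_subset[OF C(1)] by auto
  have "\<forall>n. \<exists>V. cozero_set_in X V \<and> topspace X - G n \<subseteq> V \<and> V \<subseteq> topspace X - C"
  proof
    fix n
    have "disjnt C (topspace X - G n)"
      using G_Inter by (auto simp: disjnt_def)
    with normal C(1) G_open[of n] show "\<exists>V. cozero_set_in X V \<and> topspace X - G n \<subseteq> V \<and> V \<subseteq> topspace X - C"
      by (metis closedin_diff closedin_topspace normal_space_separating_cozero_set)
  qed
  then obtain V where V: "\<And>n. cozero_set_in X (V n)"
    and V_lower: "\<And>n. topspace X - G n \<subseteq> V n" and V_upper: "\<And>n. V n \<subseteq> topspace X - C"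
    by (metis choice)
  have "topspace X - C \<subseteq> (\<Union>n. V n)"
  proof
    fix x assume "x \<in> topspace X - C"
    then obtain n where "x \<in> topspace X - G n"
      using G_Inter by blast
    then show "x \<in> (\<Union>n. V n)"
      using V_lower by blast
  qed
  with V_upper have "topspace X - C = (\<Union>n. V n)"
    by blast
  then show ?thesis
    using cozero_set_in_UN[OF V] by simp
qed

lemma perfectly_normal_space_openin_imp_cozero_set_in:
  assumes "perfectly_normal_space X" and "openin X W"
  shows "cozero_set_in X W"
proof -
  have "cozero_set_in X (topspace X - (topspace X - W))"
    using assms unfolding perfectly_normal_space_def
    by (intro normal_space_gdelta_in_imp_cozero_set_in_complement) auto
  then show ?thesis
    using openin_subset[OF assms(2)] by (simp add: Diff_Diff_Int Int_absorb1)
qed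

lemma dense_Un_diff_closure_of:
  assumes "X closure_of U = topspace X"
  shows "X closure_of (W \<union> (U - X closure_of W)) = topspace X"
  unfolding dense_intersects_open
proof (intro allI impI)
  fix Q assume Q: "openin X Q \<and> Q \<noteq> {}"
  then have "U \<inter> Q \<noteq> {}"
    using assms unfolding dense_intersects_open by blast
  moreover have "Q \<inter> X closure_of W = {}" if "W \<inter> Q = {}"
    using that openin_Int_closure_of_eq_empty[of X Q W] Q by blast
  ultimately show "(W \<union> (U - X closure_of W)) \<inter> Q \<noteq> {}"
    by blast
qed

lemma continuous_map_subtopology_Un_openin:
  assumes "openin X S" "openin X T"
    and "continuous_map (subtopology X S) Y f" "continuous_map (subtopology X T) Y f"
  shows "continuous_map (subtopology X (S \<union> T)) Y f"
proof (rule pasting_lemma[where I = "{S, T}" and T = id and f = "\<lambda>_. f"])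
  show "openin (subtopology X (S \<union> T)) (id A)" if "A \<in> {S, T}" for A
    unfolding openin_subtopology using that assms(1,2) by auto
qed (use assms(3,4) in \<open>auto simp: subtopology_subtopology Int_absorb1\<close>)

lemma openin_nonzero_subtopology:
  fixes f :: "'a \<Rightarrow> real"
  assumes U: "openin X U" and f: "continuous_map (subtopology X U) euclideanreal f"
  shows "openin X {x \<in> U. f x \<noteq> 0}"
proof (rule openin_trans_full[OF _ U])
  have "openin (subtopology X U) {x \<in> topspace (subtopology X U). f x \<in> - {0}}"
    by (rule openin_continuous_map_preimage[OF f]) (simp add: open_Compl)
  moreover have "{x \<in> topspace (subtopology X U). f x \<in> - {0}} = {x \<in> U. f x \<noteq> 0}"
    using openin_subset[OF U] by auto
  ultimately show "openin (subtopology X U) {x \<in> U. f x \<noteq> 0}"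
    by simp
qed

lemma continuous_map_inverse_Un_diff_closure_of:
  fixes f :: "'a \<Rightarrow> real"
  assumes U: "openin X U" and f: "continuous_map (subtopology X U) euclideanreal f"
  defines "W \<equiv> {x \<in> U. f x \<noteq> 0}"
  shows "continuous_map (subtopology X (W \<union> (U - X closure_of W))) euclideanreal (\<lambda>x. inverse (f x))"
proof (rule continuous_map_subtopology_Un_openin)
  show W: "openin X W"
    unfolding W_def using U f by (rule openin_nonzero_subtopology)
  show "openin X (U - X closure_of W)"
    by (intro openin_diff U closedin_closure_of)
  have "continuous_map (subtopology X W) euclideanreal f"
    using continuous_map_from_subtopology_mono[OF f] by (auto simp: W_def)
  then show "continuous_map (subtopology X W) euclideanreal (\<lambda>x. inverse (f x))"
    by (rule continuous_map_real_inverse) (auto simp: W_def)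
  have "W \<subseteq> X closure_of W"
    using closure_of_subset openin_subset[OF W] by blast
  then have vanish: "inverse (f x) = 0" if "x \<in> U - X closure_of W" for x
    using that by (auto simp: W_def)
  have "continuous_map (subtopology X (U - X closure_of W)) euclideanreal (\<lambda>_. 0)"
    by simp
  then show "continuous_map (subtopology X (U - X closure_of W)) euclideanreal (\<lambda>x. inverse (f x))"
    by (rule continuous_map_eq) (use vanish in auto)
qed

lemma Tpp_inverse:
  assumes "perfectly_normal_space X" and "f \<in> Tpp X"
  shows "(\<lambda>x. inverse (f x)) \<in> Tpp X"
proof -
  obtain U where f0: "\<And>x. x \<notin> topspace X \<Longrightarrow> f x = 0" and "cozero_set_in X U"
    and U_dense: "X closure_of U = topspace X" and f: "continuous_map (subtopology X U) euclideanreal f"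
    using assms(2) unfolding Tpp_def by auto
  then have U: "openin X U"
    by (simp add: cozero_set_in_imp_openin)
  define W where "W = {x \<in> U. f x \<noteq> 0}"
  define V where "V = W \<union> (U - X closure_of W)"
  have "openin X W"
    unfolding W_def using U f by (rule openin_nonzero_subtopology)
  with U have "cozero_set_in X V"
    unfolding V_def
    by (intro perfectly_normal_space_openin_imp_cozero_set_in assms(1) openin_Un openin_diff
        closedin_closure_of)
  moreover have "X closure_of V = topspace X"
    unfolding V_def by (rule dense_Un_diff_closure_of[OF U_dense])
  moreover have "continuous_map (subtopology X V) euclideanreal (\<lambda>x. inverse (f x))"
    unfolding V_def W_def by (rule continuous_map_inverse_Un_diff_closure_of[OF U f])
  ultimately show ?thesis
    unfolding Tpp_def using f0 by auto
qed

theorem theorem3p2: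
  fixes X :: "'a topology"
  assumes "perfectly_normal_space X" and "t1_space X"
  shows "regular_fun_ring (Tpp X)"
  unfolding regular_fun_ring_def
proof
  fix f assume f: "f \<in> Tpp X"
  show "\<exists>g\<in>Tpp X. f = (\<lambda>x. (f x)\<^sup>2 * g x)"
  proof
    show "(\<lambda>x. inverse (f x)) \<in> Tpp X"
      by (rule Tpp_inverse[OF assms(1) f])
    show "f = (\<lambda>x. (f x)\<^sup>2 * inverse (f x))"
    proof
      show "f x = (f x)\<^sup>2 * inverse (f x)" for x
        by (cases "f x = 0") (simp_all add: power2_eq_square)
    qed
  qed
qed

end
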